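(* Let $n\ge 3$ and let $\mathcal{M}$ be a uniform oriented matroid of rank $3$ on $n$ elements. Then $\operatorname{diam}(G^*(\mathcal{M}))=n-1$ $(=n-r+2)$.
   Context: Sign vectors: for a finite set $E$ and $X\in\{+,-,0\}^E$, write $X^+=\{e:X_e=+\}$, $X^-=\{e:X_e=-\}$, $X^0=\{e:X_e=0\}$, $\operatorname{supp}(X)=X^+\cup X^-$, and $-X$ for the componentwise negation. For sign vectors $X,Y$, the separating set is $S(X,Y)=(X^+\cap Y^-)\cup(X^-\cap Y^+)$, and the composition $X\circ Y$ is given by $(X\circ Y)_e=X_e$ if $X_e\neq 0$ and $(X\circ Y)_e=Y_e$ otherwise. An oriented matroid $\mathcal{M}=(E,\mathcal{C}^* )$ is a finite set $E$ together with a set $\mathcal{C}^*\subseteq\{+,-,0\}^E$ of (signed) cocircuits satisfying: (CC0) $\mathbf{0}\notin\mathcal{C}^*$; (CC1) $X\in\mathcal{C}^*\Rightarrow -X\in\mathcal{C}^*$; (CC2) if $X,Y\in\mathcal{C}^*$ and $\operatorname{supp}(X)\subseteq\operatorname{supp}(Y)$ then $X=\pm Y$; (CC3) if $X,Y\in\mathcal{C}^*$, $X\neq -Y$ and $e\in S(X,Y)$, then there is $Z\in\mathcal{C}^*$ with $Z^+\subseteq (X^+\cup Y^+)\setminus\{e\}$ and $Z^-\subseteq (X^-\cup Y^-)\setminus\{e\}$. The covectors of $\mathcal{M}$ are $\mathbf{0}$ together with all compositions $X^1\circ\cdots\circ X^k$ ($k\ge 1$) of cocircuits, partially ordered componentwise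 by $0<+$ and $0<-$ ($+,-$ incomparable). The rank $r$ of $\mathcal{M}$ is the largest $k$ such that there is a chain $\mathbf{0}=V_0<V_1<\cdots<V_k$ of covectors. $\mathcal{M}$ is uniform if $|X^0|=r-1$ for every cocircuit $X$. The cocircuit graph $G^*(\mathcal{M})$ has the cocircuits as vertices, with distinct cocircuits $X,Y$ adjacent iff $|X^0\cap Y^0|\ge r-2$ and $S(X,Y)=\emptyset$. $\operatorname{diam}(G^*(\mathcal{M}))$ is the maximum graph distance between two cocircuits. *)

theory Defs
  imports Main "HOL-Library.Extended_Nat"
begin

datatype sign = Pos | Neg | Zer

type_synonym 'a signvec = "'a \<Rightarrow> sign"

definition sv_zero :: "'a signvec" where "sv_zero = (\<lambda>_. Zer)"

definition sv_neg :: "'a signvec \<Rightarrow> 'a signvec" where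
  "sv_neg X = (\<lambda>e. case X e of Pos \<Rightarrow> Neg | Neg \<Rightarrow> Pos | Zer \<Rightarrow> Zer)"

definition sv_plus :: "'a signvec \<Rightarrow> 'a set" where "sv_plus X = {e. X e = Pos}"
definition sv_minus :: "'a signvec \<Rightarrow> 'a set" where "sv_minus X = {e. X e = Neg}"
definition sv_supp :: "'a signvec \<Rightarrow> 'a set" where "sv_supp X = {e. X e \<noteq> Zer}"
definition sv_zeroset :: "'a set \<Rightarrow> 'a signvec \<Rightarrow> 'a set" where
  "sv_zeroset E X = {e\<in>E. X e = Zer}"

definition sv_sep :: "'a signvec \<Rightarrow> 'a signvec \<Rightarrow> 'a set" where
  "sv_sep X Y = (sv_plus X \<inter> sv_minus Y) \<union> (sv_minus X \<inter> sv_plus Y)"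

definition sv_comp :: "'a signvec \<Rightarrow> 'a signvec \<Rightarrow> 'a signvec" where
  "sv_comp X Y = (\<lambda>e. if X e \<noteq> Zer then X e else Y e)"

(* sign vectors in {+,-,0}^E are represented as functions vanishing outside E *)
definition oriented_matroid :: "'a set \<Rightarrow> 'a signvec set \<Rightarrow> bool" where
  "oriented_matroid E C \<longleftrightarrow>
     finite E \<and>
     (\<forall>X\<in>C. \<forall>e. e \<notin> E \<longrightarrow> X e = Zer) \<and>
     sv_zero \<notin> C \<and>
     (\<forall>X\<in>C. sv_neg X \<in> C) \<and>
     (\<forall>X\<in>C. \<forall>Y\<in>C. sv_supp X \<subseteq> sv_supp Y \<longrightarrow> X = Y \<or> X = sv_neg Y) \<and>
     (\<forall>X\<in>C. \<forall>Y\<in>C. \<forall>e. X \<noteq> sv_neg Y \<and> e \<in> sv_sep X Y \<longrightarrow>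
        (\<exists>Z\<in>C. sv_plus Z \<subseteq> (sv_plus X \<union> sv_plus Y) - {e} \<and>
                sv_minus Z \<subseteq> (sv_minus X \<union> sv_minus Y) - {e}))"

definition covectors :: "'a signvec set \<Rightarrow> 'a signvec set" where
  "covectors C = insert sv_zero
     {foldr sv_comp Xs sv_zero | Xs. Xs \<noteq> [] \<and> set Xs \<subseteq> C}"

definition sv_le :: "'a signvec \<Rightarrow> 'a signvec \<Rightarrow> bool" where
  "sv_le X Y \<longleftrightarrow> (\<forall>e. X e = Zer \<or> X e = Y e)"

definition sv_less :: "'a signvec \<Rightarrow> 'a signvec \<Rightarrow> bool" where
  "sv_less X Y \<longleftrightarrow> sv_le X Y \<and> X \<noteq> Y"

definition om_rank :: "'a signvec set \<Rightarrow> nat" where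
  "om_rank C = Max {k. \<exists>V :: nat \<Rightarrow> 'a signvec. V 0 = sv_zero \<and>
      (\<forall>i\<le>k. V i \<in> covectors C) \<and> (\<forall>i<k. sv_less (V i) (V (Suc i)))}"

definition uniform_om :: "'a set \<Rightarrow> 'a signvec set \<Rightarrow> bool" where
  "uniform_om E C \<longleftrightarrow> (\<forall>X\<in>C. card (sv_zeroset E X) = om_rank C - 1)"

definition cg_adj :: "'a set \<Rightarrow> 'a signvec set \<Rightarrow> 'a signvec \<Rightarrow> 'a signvec \<Rightarrow> bool" where
  "cg_adj E C X Y \<longleftrightarrow> X \<in> C \<and> Y \<in> C \<and> X \<noteq> Y \<and>
     card (sv_zeroset E X \<inter> sv_zeroset E Y) \<ge> om_rank C - 2 \<and> sv_sep X Y = {}"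

(* graph distance in the cocircuit graph (infinity if no path) *)
definition cg_dist :: "'a set \<Rightarrow> 'a signvec set \<Rightarrow> 'a signvec \<Rightarrow> 'a signvec \<Rightarrow> enat" where
  "cg_dist E C X Y = (INF k \<in> {k. \<exists>p. length p = Suc k \<and> p ! 0 = X \<and> p ! k = Y \<and>
        set p \<subseteq> C \<and> (\<forall>i<k. cg_adj E C (p ! i) (p ! Suc i))}. enat k)"

definition cg_diam :: "'a set \<Rightarrow> 'a signvec set \<Rightarrow> enat" where
  "cg_diam E C = (SUP X\<in>C. SUP Y\<in>C. cg_dist E C X Y)"

end

theory Submission
  imports Defs
begin

text \<open>In rank 3 every cocircuit has exactly two zeros, and adjacent cocircuits share a zero and do
  not separate. Hence along a walk the set of zeros seen grows by at most one per step, and an element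
  can change sign only by becoming a zero. On a walk from X to -X every element changes sign or is a
  zero of X, and the last zero set repeats the first, so a walk of length k meets at most k + 1 of the
  n elements: k \<ge> n - 1.

  Conversely, cocircuits X, Y with a common zero are joined by a walk of length at most
  |S(X,Y)| + 1 \<le> n - 1, obtained by recursively eliminating separating elements. Otherwise pick a
  zero a of X and a zero c of Y; some cocircuit Z vanishes at both (any two elements lie in a common
  zero set), and routing through Z or through -Z, whichever separates less from X and Y, gives a walk
  of length at most n - 1.\<close>

lemma sv_neg_neg [simp]: "sv_neg (sv_neg X) = X"
  by (auto simp: sv_neg_def fun_eq_iff split: sign.splits)

lemma sv_neg_eq_Zer_iff [simp]: "sv_neg X e = Zer \<longleftrightarrow> X e = Zer"
  and sv_neg_eq_Pos_iff [simp]: "sv_neg X e = Pos \<longleftrightarrow> X e = Neg"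
  and sv_neg_eq_Neg_iff [simp]: "sv_neg X e = Neg \<longleftrightarrow> X e = Pos"
  by (auto simp: sv_neg_def split: sign.splits)

lemma mem_sv_sep: "e \<in> sv_sep X Y \<longleftrightarrow> X e \<noteq> Zer \<and> Y e \<noteq> Zer \<and> X e \<noteq> Y e"
  by (cases "X e"; cases "Y e") (auto simp: sv_sep_def sv_plus_def sv_minus_def)

lemma sv_sep_commute: "sv_sep X Y = sv_sep Y X"
  by (auto simp: mem_sv_sep)

lemma sv_sep_neg: "sv_sep (sv_neg X) Y = sv_sep X (sv_neg Y)"
  by (auto simp: sv_sep_def sv_plus_def sv_minus_def)

lemma sv_sep_disjoint_sv_sep_neg: "sv_sep X Y \<inter> sv_sep X (sv_neg Y) = {}"
  by (auto simp: sv_sep_def sv_plus_def sv_minus_def)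

lemma mem_sv_supp: "e \<in> sv_supp X \<longleftrightarrow> X e \<noteq> Zer"
  by (simp add: sv_supp_def)

lemma sv_supp_foldr_comp: "sv_supp (foldr sv_comp Xs sv_zero) = (\<Union>X\<in>set Xs. sv_supp X)"
  by (induction Xs) (auto simp: sv_comp_def sv_zero_def sv_supp_def)

lemma sv_less_supp_psubset: "sv_less V W \<Longrightarrow> sv_supp V \<subset> sv_supp W"
  unfolding sv_less_def sv_le_def sv_supp_def by (force simp: fun_eq_iff)

lemma covector_eq_foldr_comp:
  assumes "V \<in> covectors C" "V \<noteq> sv_zero"
  obtains Xs where "Xs \<noteq> []" "set Xs \<subseteq> C" "V = foldr sv_comp Xs sv_zero"
  using assms that by (auto simp: covectors_def)

lemma covector_supp_subset:
  assumes "\<forall>X\<in>C. \<forall>e. e \<notin> E \<longrightarrow> X e = Zer" and "V \<in> covectors C"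
  shows "sv_supp V \<subseteq> E"
  using assms by (auto simp: covectors_def sv_supp_foldr_comp) (auto simp: sv_supp_def sv_zero_def)

lemma om_rank_chain:
  assumes "finite E" and "\<forall>X\<in>C. \<forall>e. e \<notin> E \<longrightarrow> X e = Zer"
  shows "\<exists>V. V 0 = sv_zero \<and> (\<forall>i\<le>om_rank C. V i \<in> covectors C) \<and>
           (\<forall>i<om_rank C. sv_less (V i) (V (Suc i)))"
proof -
  define K where "K = {k. \<exists>V :: nat \<Rightarrow> 'a signvec. V 0 = sv_zero \<and>
      (\<forall>i\<le>k. V i \<in> covectors C) \<and> (\<forall>i<k. sv_less (V i) (V (Suc i)))}"
  have "k \<le> card E" if "k \<in> K" for k
  proof -
    from that obtain V :: "nat \<Rightarrow> 'a signvec" where V: "V 0 = sv_zero"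
      "\<forall>i\<le>k. V i \<in> covectors C" "\<forall>i<k. sv_less (V i) (V (Suc i))"
      unfolding K_def by blast
    have "j \<le> card (sv_supp (V j))" if "j \<le> k" for j
      using that
    proof (induction j)
      case (Suc j)
      have "sv_supp (V (Suc j)) \<subseteq> E"
        using covector_supp_subset[OF assms(2)] V(2) Suc.prems by blast
      then have "card (sv_supp (V j)) < card (sv_supp (V (Suc j)))"
        using V(3) Suc.prems assms(1)
        by (intro psubset_card_mono sv_less_supp_psubset) (auto intro: finite_subset)
      with Suc show ?case by simp
    qed simp
    also have "card (sv_supp (V k)) \<le> card E"
      using covector_supp_subset[OF assms(2)] V(2) assms(1) by (intro card_mono) auto
    finally show ?thesis by simp
  qed
  then have "finite K"
    using finite_nat_set_iff_bounded_le by blast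
  moreover have "0 \<in> K"
    unfolding K_def by (intro CollectI exI[of _ "\<lambda>_. sv_zero"]) (simp add: covectors_def)
  ultimately have "Max K \<in> K"
    by (intro Max_in) auto
  then show ?thesis
    unfolding K_def om_rank_def by simp
qed

inductive walk :: "'a set \<Rightarrow> 'a signvec set \<Rightarrow> 'a signvec \<Rightarrow> 'a signvec \<Rightarrow> nat \<Rightarrow> bool"
  for E C where
  walk_Nil: "X \<in> C \<Longrightarrow> walk E C X X 0"
| walk_Cons: "cg_adj E C X Y \<Longrightarrow> walk E C Y Z k \<Longrightarrow> walk E C X Z (Suc k)"

lemma walk_trans: "walk E C X Y k \<Longrightarrow> walk E C Y Z m \<Longrightarrow> walk E C X Z (k + m)"
  by (induction rule: walk.induct) (auto intro: walk.intros)

lemma walk_start_in: "walk E C X Y k \<Longrightarrow> X \<in> C"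
  by (induction rule: walk.induct) (auto simp: cg_adj_def)

lemma walk_iff_path:
  "walk E C X Y k \<longleftrightarrow> (\<exists>p. length p = Suc k \<and> p ! 0 = X \<and> p ! k = Y \<and> set p \<subseteq> C \<and>
      (\<forall>i<k. cg_adj E C (p ! i) (p ! Suc i)))"
proof
  assume "walk E C X Y k"
  then show "\<exists>p. length p = Suc k \<and> p ! 0 = X \<and> p ! k = Y \<and> set p \<subseteq> C \<and>
      (\<forall>i<k. cg_adj E C (p ! i) (p ! Suc i))"
  proof (induction rule: walk.induct)
    case (walk_Nil X)
    then show ?case by (intro exI[of _ "[X]"]) auto
  next
    case (walk_Cons X Y Z k)
    then obtain p where p: "length p = Suc k" "p ! 0 = Y" "p ! k = Z" "set p \<subseteq> C"
      "\<forall>i<k. cg_adj E C (p ! i) (p ! Suc i)" by blast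
    have "\<forall>i<Suc k. cg_adj E C ((X # p) ! i) ((X # p) ! Suc i)"
      using p walk_Cons.hyps by (auto simp: less_Suc_eq_0_disj)
    with p walk_Cons.hyps show ?case
      by (intro exI[of _ "X # p"]) (auto simp: cg_adj_def)
  qed
next
  assume "\<exists>p. length p = Suc k \<and> p ! 0 = X \<and> p ! k = Y \<and> set p \<subseteq> C \<and>
      (\<forall>i<k. cg_adj E C (p ! i) (p ! Suc i))"
  then obtain p where "length p = Suc k" "p ! 0 = X" "p ! k = Y" "set p \<subseteq> C"
      "\<forall>i<k. cg_adj E C (p ! i) (p ! Suc i)" by blast
  then show "walk E C X Y k"
  proof (induction k arbitrary: p X)
    case 0
    then show ?case by (auto simp: length_Suc_conv intro: walk_Nil)
  next
    case (Suc k)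
    then obtain q where p: "p = X # q" "length q = Suc k"
      by (cases p) auto
    have "walk E C (q ! 0) Y k"
      using Suc.prems p by (intro Suc.IH) auto
    moreover have "cg_adj E C X (q ! 0)"
      using Suc.prems(5) p by force
    ultimately show ?case by (intro walk_Cons)
  qed
qed

lemma cg_dist_eq_INF_walk: "cg_dist E C X Y = (INF k \<in> {k. walk E C X Y k}. enat k)"
  unfolding cg_dist_def walk_iff_path ..

locale uniform_rank3_om =
  fixes E :: "'a set" and C :: "'a signvec set"
  assumes om: "oriented_matroid E C" and rank: "om_rank C = 3"
    and uniform: "uniform_om E C" and card_E_ge: "3 \<le> card E"
begin

abbreviation zs :: "'a signvec \<Rightarrow> 'a set" where "zs X \<equiv> sv_zeroset E X"

lemma mem_zs: "e \<in> zs X \<longleftrightarrow> e \<in> E \<and> X e = Zer"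
  by (simp add: sv_zeroset_def)

lemma finite_E: "finite E"
  using om by (simp add: oriented_matroid_def)

lemma vanishes_outside: "\<forall>X\<in>C. \<forall>e. e \<notin> E \<longrightarrow> X e = Zer"
  using om by (simp add: oriented_matroid_def)

lemma sv_neg_in: "X \<in> C \<Longrightarrow> sv_neg X \<in> C"
  using om by (simp add: oriented_matroid_def)

lemma zs_sv_neg [simp]: "zs (sv_neg X) = zs X"
  by (auto simp: mem_zs)

lemma finite_zs: "finite (zs X)"
  using finite_E by (simp add: sv_zeroset_def)

lemma card_zs: "X \<in> C \<Longrightarrow> card (zs X) = 2"
  using uniform rank by (simp add: uniform_om_def)

lemma zs_eq_pair: "X \<in> C \<Longrightarrow> x \<noteq> y \<Longrightarrow> x \<in> zs X \<Longrightarrow> y \<in> zs X \<Longrightarrow> zs X = {x, y}"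
  using card_subset_eq[OF finite_zs, of "{x, y}" X] card_zs by auto

lemma card_E_minus_zs: "X \<in> C \<Longrightarrow> card (E - zs X) = card E - 2"
  using card_Diff_subset[OF finite_zs, of X E] card_zs by (auto simp: sv_zeroset_def)

lemma sv_sep_subset: "X \<in> C \<Longrightarrow> sv_sep X Y \<subseteq> E - zs X"
  using vanishes_outside by (auto simp: mem_sv_sep mem_zs) blast

lemma cocircuit_ne_sv_neg: "X \<in> C \<Longrightarrow> X \<noteq> sv_neg X"
proof
  assume X: "X \<in> C" "X = sv_neg X"
  have "X e = Zer" for e
    using fun_cong[OF X(2), of e] by (cases "X e") (auto simp: sv_neg_def)
  then have "X = sv_zero"
    by (auto simp: sv_zero_def)
  with X(1) om show False
    by (simp add: oriented_matroid_def)
qed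

lemma cocircuit_nonzero_elem:
  assumes "X \<in> C" obtains c where "c \<in> E" "X c \<noteq> Zer"
proof -
  have "card (E - zs X) \<noteq> 0"
    using card_E_minus_zs[OF assms] card_E_ge by simp
  then obtain c where "c \<in> E - zs X"
    by (metis card.empty ex_in_conv)
  with that show ?thesis by (auto simp: mem_zs)
qed

lemma cg_adj_iff:
  "cg_adj E C X Y \<longleftrightarrow> X \<in> C \<and> Y \<in> C \<and> X \<noteq> Y \<and> zs X \<inter> zs Y \<noteq> {} \<and> sv_sep X Y = {}"
  using finite_zs by (simp add: cg_adj_def rank Suc_le_eq card_gt_0_iff)

lemma elimination:
  assumes "X \<in> C" "Y \<in> C" "X \<noteq> sv_neg Y" "e \<in> sv_sep X Y"
  obtains W where "W \<in> C" "W e = Zer" "\<And>h. W h \<noteq> Zer \<Longrightarrow> W h = X h \<or> W h = Y h"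
proof -
  obtain W where W: "W \<in> C" "sv_plus W \<subseteq> (sv_plus X \<union> sv_plus Y) - {e}"
    "sv_minus W \<subseteq> (sv_minus X \<union> sv_minus Y) - {e}"
    using om assms unfolding oriented_matroid_def by meson
  have "W h = X h \<or> W h = Y h" if "W h \<noteq> Zer" for h
    using W(2,3) that by (cases "W h") (auto simp: sv_plus_def sv_minus_def)
  moreover have "W e = Zer"
    using W(2,3) by (cases "W e") (auto simp: sv_plus_def sv_minus_def)
  ultimately show ?thesis using that W(1) by blast
qed

lemma elimination_splits_sv_sep:
  assumes "X \<in> C" "Z \<in> C" "X \<noteq> sv_neg Z" "e \<in> sv_sep X Z"
  obtains W where "W \<in> C" "\<And>h. X h = Zer \<Longrightarrow> Z h = Zer \<Longrightarrow> W h = Zer"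
    "X \<noteq> sv_neg W" "W \<noteq> sv_neg Z" "card (sv_sep X W) + card (sv_sep W Z) < card (sv_sep X Z)"
proof -
  obtain W where W: "W \<in> C" "W e = Zer" "\<And>h. W h \<noteq> Zer \<Longrightarrow> W h = X h \<or> W h = Z h"
    using elimination[OF assms] by blast
  have sep_XW: "sv_sep X W \<subseteq> sv_sep X Z - {e}"
  proof
    fix h assume h: "h \<in> sv_sep X W"
    then have "W h = Z h"
      using W(3)[of h] by (auto simp: mem_sv_sep)
    with h W(2) show "h \<in> sv_sep X Z - {e}"
      by (auto simp: mem_sv_sep)
  qed
  have sep_WZ: "sv_sep W Z \<subseteq> sv_sep X Z - {e}"
  proof
    fix h assume h: "h \<in> sv_sep W Z"
    then have "W h = X h"
      using W(3)[of h] by (auto simp: mem_sv_sep)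
    with h W(2) show "h \<in> sv_sep X Z - {e}"
      by (auto simp: mem_sv_sep)
  qed
  have disj: "sv_sep X W \<inter> sv_sep W Z = {}"
  proof -
    have False if "h \<in> sv_sep X W" "h \<in> sv_sep W Z" for h
      using that W(3)[of h] by (auto simp: mem_sv_sep)
    then show ?thesis by blast
  qed
  have fin: "finite (sv_sep X Z)"
    using sv_sep_subset[OF assms(1)] finite_E by (auto intro: finite_subset)
  have "card (sv_sep X W) + card (sv_sep W Z) = card (sv_sep X W \<union> sv_sep W Z)"
    using disj sep_XW sep_WZ fin by (intro card_Un_disjoint[symmetric]) (auto intro: finite_subset)
  also have "\<dots> \<le> card (sv_sep X Z - {e})"
    using sep_XW sep_WZ fin by (intro card_mono) auto
  also have "\<dots> < card (sv_sep X Z)"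
    using assms(4) fin by (intro psubset_card_mono) auto
  finally have "card (sv_sep X W) + card (sv_sep W Z) < card (sv_sep X Z)" .
  moreover have "X \<noteq> sv_neg W" "W \<noteq> sv_neg Z"
    using assms(4) W(2) by (auto simp: mem_sv_sep)
  moreover have "W h = Zer" if "X h = Zer" "Z h = Zer" for h
    using W(3)[of h] that by auto
  ultimately show ?thesis
    using that W(1) by blast
qed

text \<open>Repeated elimination between two cocircuits with a common zero a stays among the cocircuits
  vanishing at a, and each elimination strictly shrinks the separating sets.\<close>

lemma walk_through_common_zero:
  assumes "X \<in> C" "Z \<in> C" "a \<in> E" "X a = Zer" "Z a = Zer" "X \<noteq> sv_neg Z"
  shows "\<exists>k. walk E C X Z k \<and> k \<le> card (sv_sep X Z) + 1"
  using assms
proof (induction "card (sv_sep X Z)" arbitrary: X Z rule: less_induct)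
  case less
  consider "X = Z" | "X \<noteq> Z" "sv_sep X Z = {}" | e where "e \<in> sv_sep X Z"
    by blast
  then show ?case
  proof cases
    case 1
    then show ?thesis using less.prems walk_Nil by blast
  next
    case 2
    with less.prems have "cg_adj E C X Z"
      by (auto simp: cg_adj_iff mem_zs)
    then have "walk E C X Z 1"
      using walk_Cons walk_Nil less.prems(2) by fastforce
    then show ?thesis by auto
  next
    case (3 e)
    obtain W where W: "W \<in> C" "\<And>h. X h = Zer \<Longrightarrow> Z h = Zer \<Longrightarrow> W h = Zer"
      "X \<noteq> sv_neg W" "W \<noteq> sv_neg Z" and
      lt: "card (sv_sep X W) + card (sv_sep W Z) < card (sv_sep X Z)"
      using elimination_splits_sv_sep[OF less.prems(1,2,6) 3] by blast
    have Wa: "W a = Zer"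
      using W(2) less.prems(4,5) by blast
    obtain k1 k2 where
      k1: "walk E C X W k1" "k1 \<le> card (sv_sep X W) + 1" and
      k2: "walk E C W Z k2" "k2 \<le> card (sv_sep W Z) + 1"
      using less.hyps[OF _ less.prems(1) W(1) less.prems(3,4) Wa W(3)]
        less.hyps[OF _ W(1) less.prems(2,3) Wa less.prems(5) W(4)] lt by fastforce
    then show ?thesis
      using walk_trans[OF k1(1) k2(1)] lt by (intro exI[of _ "k1 + k2"]) auto
  qed
qed

lemma walk_zero_cover:
  assumes "walk E C X Z k"
  shows "\<exists>S\<subseteq>E. card S \<le> k + 2 \<and> zs X \<union> zs Z \<subseteq> S \<and> {e. X e \<noteq> Z e} \<subseteq> S"
  using assms
proof (induction rule: walk.induct)
  case (walk_Nil X)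
  then show ?case
    using card_zs[of X] by (intro exI[of _ "zs X"]) (auto simp: mem_zs)
next
  case (walk_Cons X Y Z k)
  then obtain S where S: "S \<subseteq> E" "card S \<le> k + 2" "zs Y \<union> zs Z \<subseteq> S" "{e. Y e \<noteq> Z e} \<subseteq> S"
    by blast
  have adj: "X \<in> C" "Y \<in> C" "zs X \<inter> zs Y \<noteq> {}" "sv_sep X Y = {}"
    using walk_Cons.hyps(1) by (auto simp: cg_adj_iff)
  have "card (zs X - S) \<le> 1"
  proof -
    have "card (zs X - S) \<le> card (zs X - (zs X \<inter> zs Y))"
      using S(3) finite_zs by (intro card_mono) auto
    also have "\<dots> = 2 - card (zs X \<inter> zs Y)"
      using finite_zs card_zs[OF adj(1)] by (simp add: card_Diff_subset)
    also have "\<dots> \<le> 1"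
      using adj(3) finite_zs[of X] card_gt_0_iff[of "zs X \<inter> zs Y"] by simp
    finally show ?thesis .
  qed
  moreover have "S \<union> zs X = S \<union> (zs X - S)"
    by blast
  ultimately have "card (S \<union> zs X) \<le> Suc k + 2"
    using S(2) card_Un_le[of S "zs X - S"] by simp
  moreover have "{e. X e \<noteq> Z e} \<subseteq> S \<union> zs X"
  proof
    fix e assume "e \<in> {e. X e \<noteq> Z e}"
    show "e \<in> S \<union> zs X"
    proof (cases "X e = Y e")
      case False
      moreover have "e \<in> E"
        using False adj(1,2) vanishes_outside by metis
      moreover have "e \<notin> sv_sep X Y"
        using adj(4) by blast
      ultimately show ?thesis
        using S(3) by (auto simp: mem_sv_sep mem_zs)
    qed (use S(4) \<open>e \<in> {e. X e \<noteq> Z e}\<close> in auto)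
  qed
  ultimately show ?case
    using S(1,3) by (intro exI[of _ "S \<union> zs X"]) (auto simp: sv_zeroset_def)
qed

lemma walk_to_sv_neg_length:
  assumes "walk E C X (sv_neg X) k"
  shows "card E - 1 \<le> k"
proof -
  have X: "X \<in> C"
    using walk_start_in[OF assms] .
  have "k \<noteq> 0"
  proof
    assume "k = 0"
    with assms have "X = sv_neg X"
      by (auto elim: walk.cases)
    with X cocircuit_ne_sv_neg show False by blast
  qed
  then obtain Y m where k: "k = Suc m" and adj: "cg_adj E C X Y" and Y: "walk E C Y (sv_neg X) m"
    using assms by (auto elim: walk.cases)
  obtain S where S: "S \<subseteq> E" "card S \<le> m + 2" "zs Y \<union> zs X \<subseteq> S" "{e. Y e \<noteq> sv_neg X e} \<subseteq> S"
    using walk_zero_cover[OF Y] by auto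
  \<comment> \<open>An element that is a zero of neither X nor Y keeps its sign from X to Y, so Y differs from -X there.\<close>
  have "E \<subseteq> S"
  proof
    fix e assume e: "e \<in> E"
    have "e \<notin> sv_sep X Y"
      using adj by (simp add: cg_adj_iff)
    then consider "X e = Zer" | "Y e = Zer" | "Y e = X e" "X e \<noteq> Zer"
      by (metis mem_sv_sep)
    then show "e \<in> S"
    proof cases
      case 3
      then have "Y e \<noteq> sv_neg X e"
        by (cases "X e") (auto simp: sv_neg_def)
      then show ?thesis using S(4) by blast
    qed (use S(3) e in \<open>auto simp: mem_zs\<close>)
  qed
  then have "card E \<le> card S"
    using finite_E S(1) by (intro card_mono) (auto intro: finite_subset)
  with S(2) k show ?thesis by simp
qed

lemma finite_covector_supp: "V \<in> covectors C \<Longrightarrow> finite (sv_supp V)"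
  using covector_supp_subset[OF vanishes_outside] finite_E by (blast intro: finite_subset)

lemma sv_supp_cocircuit: "X \<in> C \<Longrightarrow> sv_supp X = E - zs X"
  using vanishes_outside by (auto simp: sv_supp_def mem_zs)

text \<open>A maximal chain of covectors has length 3, and its supports grow from at least
  \<open>card E - 2\<close> elements (those of a cocircuit) to at most \<open>card E\<close>.\<close>

lemma rank3_covectors:
  obtains V2 V3 where "V2 \<in> covectors C" "V3 \<in> covectors C"
    "card (E - sv_supp V2) = 1" "sv_supp V3 = E"
proof -
  obtain V where V0: "V 0 = sv_zero" and V: "\<And>i. i \<le> 3 \<Longrightarrow> V i \<in> covectors C"
    and less: "\<And>i. i < 3 \<Longrightarrow> sv_less (V i) (V (Suc i))"
    using om_rank_chain[OF finite_E vanishes_outside] rank by auto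
  have supp_E: "sv_supp (V i) \<subseteq> E" if "i \<le> 3" for i
    using covector_supp_subset[OF vanishes_outside V[OF that]] .
  have grow: "card (sv_supp (V i)) < card (sv_supp (V (Suc i)))" if "i < 3" for i
    using less[OF that] finite_covector_supp[OF V[of "Suc i"]] that
    by (intro psubset_card_mono sv_less_supp_psubset) auto
  have "V 1 \<noteq> sv_zero"
    using V0 less[of 0] by (auto simp: sv_less_def)
  then obtain Xs where Xs: "Xs \<noteq> []" "set Xs \<subseteq> C" "V 1 = foldr sv_comp Xs sv_zero"
    using covector_eq_foldr_comp[OF V[of 1]] by auto
  have hd: "hd Xs \<in> C"
    using Xs hd_in_set by blast
  then have "card E - 2 = card (sv_supp (hd Xs))"
    by (simp add: sv_supp_cocircuit card_E_minus_zs)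
  also have "\<dots> \<le> card (sv_supp (V 1))"
    using Xs hd_in_set[OF Xs(1)] finite_covector_supp[OF V[of 1]]
    by (intro card_mono) (auto simp: sv_supp_foldr_comp intro!: bexI[of _ "hd Xs"])
  finally have "card E - 2 \<le> card (sv_supp (V 1))" .
  moreover have "card (sv_supp (V 3)) \<le> card E"
    using supp_E[of 3] finite_E by (simp add: card_mono)
  ultimately have card2: "card (sv_supp (V 2)) = card E - 1" and card3: "card (sv_supp (V 3)) = card E"
    using grow[of 1] grow[of 2] card_E_ge by (simp_all add: numeral_2_eq_2 numeral_3_eq_3)
  show ?thesis
  proof (rule that[OF V V])
    show "card (E - sv_supp (V 2)) = 1"
      using card2 card_E_ge supp_E[of 2] finite_covector_supp[OF V[of 2]] by (simp add: card_Diff_subset)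
    show "sv_supp (V 3) = E"
      using card_subset_eq[OF finite_E supp_E[of 3]] card3 by simp
  qed simp_all
qed

lemma cocircuit_nonzero_at:
  assumes "e \<in> E" obtains T where "T \<in> C" "T e \<noteq> Zer"
proof -
  obtain V3 where V3: "V3 \<in> covectors C" "sv_supp V3 = E"
    using rank3_covectors by metis
  then have "V3 \<noteq> sv_zero"
    using assms by (auto simp: sv_zero_def sv_supp_def)
  then obtain Xs where "set Xs \<subseteq> C" "V3 = foldr sv_comp Xs sv_zero"
    using covector_eq_foldr_comp[OF V3(1)] by metis
  with V3(2) assms that show ?thesis
    by (auto simp: sv_supp_foldr_comp mem_sv_supp)
qed

lemma two_zero_sets_through_elem:
  obtains q X Y where "q \<in> E" "X \<in> C" "Y \<in> C" "X q = Zer" "Y q = Zer" "zs X \<noteq> zs Y"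
proof -
  obtain V2 where V2: "V2 \<in> covectors C" "card (E - sv_supp V2) = 1"
    using rank3_covectors by metis
  then obtain q where q: "E - sv_supp V2 = {q}"
    using card_1_singletonE by blast
  have "V2 \<noteq> sv_zero"
    using V2(2) card_E_ge finite_E by (auto simp: sv_zero_def sv_supp_def)
  then obtain Ys where Ys: "Ys \<noteq> []" "set Ys \<subseteq> C" "V2 = foldr sv_comp Ys sv_zero"
    using covector_eq_foldr_comp[OF V2(1)] by metis
  \<comment> \<open>All cocircuits of the composition vanish at q, but not all at the second zero p of the first one.\<close>
  have Ysq: "Y q = Zer" if "Y \<in> set Ys" for Y
  proof -
    have "q \<notin> sv_supp V2"
      using q by blast
    with that Ys(3) show ?thesis
      by (auto simp: sv_supp_foldr_comp mem_sv_supp)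
  qed
  define X where "X = hd Ys"
  have X: "X \<in> C" "X q = Zer"
    using Ys Ysq hd_in_set unfolding X_def by blast+
  have "\<not> zs X \<subseteq> {q}"
    using card_mono[of "{q}" "zs X"] card_zs[OF X(1)] by auto
  then obtain p where p: "p \<in> zs X" "p \<noteq> q"
    by blast
  then have "p \<in> sv_supp V2"
    using q by (auto simp: mem_zs)
  then obtain Y where Y: "Y \<in> set Ys" "Y p \<noteq> Zer"
    using Ys(3) by (auto simp: sv_supp_foldr_comp mem_sv_supp)
  have "q \<in> E" "Y \<in> C" "zs X \<noteq> zs Y"
    using q Y Ys(2) p by (auto simp: mem_zs)
  with that X Ysq[OF Y(1)] show ?thesis
    by blast
qed

lemma cocircuit_vanishing_at_pair:
  assumes "X \<in> C" "Y \<in> C" "X q = Zer" "Y q = Zer" "zs X \<noteq> zs Y"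
  obtains W where "W \<in> C" "W q = Zer" "W e = Zer"
proof (cases "X e = Zer \<or> Y e = Zer")
  case True
  then show ?thesis
    using that assms(1-4) by blast
next
  case False
  \<comment> \<open>Orient X so that it separates from Y at e, then eliminate e.\<close>
  define X' where "X' = (if X e = Y e then sv_neg X else X)"
  have X': "X' \<in> C" "X' q = Zer" "zs X' = zs X"
    using assms(1,3) sv_neg_in[OF assms(1)] unfolding X'_def by simp_all
  have "e \<in> sv_sep X' Y"
  proof (cases "X e = Y e")
    case True
    then have "sv_neg X e \<noteq> Y e"
      using False by (cases "Y e") simp_all
    with True False show ?thesis
      by (simp add: X'_def mem_sv_sep)
  qed (use False in \<open>simp add: X'_def mem_sv_sep\<close>)
  moreover have "X' \<noteq> sv_neg Y"
  proof
    assume "X' = sv_neg Y"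
    then have "zs X' = zs Y"
      by simp
    with X'(3) assms(5) show False
      by simp
  qed
  ultimately obtain W where W: "W \<in> C" "W e = Zer" "\<And>h. W h \<noteq> Zer \<Longrightarrow> W h = X' h \<or> W h = Y h"
    using elimination[OF X'(1) assms(2)] by blast
  have "W q = Zer"
    using W(3)[of q] X'(2) assms(4) by auto
  with W that show ?thesis
    by blast
qed

definition pairs_with_all :: "'a \<Rightarrow> bool" where
  "pairs_with_all q \<longleftrightarrow> (\<forall>e\<in>E. \<exists>Z\<in>C. Z q = Zer \<and> Z e = Zer)"

lemma pairs_with_all_if_two_zero_sets:
  assumes "X \<in> C" "Y \<in> C" "X q = Zer" "Y q = Zer" "zs X \<noteq> zs Y"
  shows "pairs_with_all q"
  unfolding pairs_with_all_def
proof
  fix e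
  obtain W where "W \<in> C" "W q = Zer" "W e = Zer"
    using cocircuit_vanishing_at_pair[OF assms] .
  then show "\<exists>Z\<in>C. Z q = Zer \<and> Z e = Zer" by blast
qed

lemma pairs_with_all_if_two:
  assumes "pairs_with_all q" "pairs_with_all s" "q \<noteq> s" "q \<in> E" "s \<in> E" "e \<in> E"
  shows "pairs_with_all e"
proof -
  consider "e = q" | "e = s" | "e \<noteq> q" "e \<noteq> s"
    by blast
  then show ?thesis
  proof cases
    case 3
    obtain Z2 where Z2: "Z2 \<in> C" "Z2 q = Zer" "Z2 e = Zer"
      using assms(1,6) unfolding pairs_with_all_def by blast
    obtain Z3 where Z3: "Z3 \<in> C" "Z3 s = Zer" "Z3 e = Zer"
      using assms(2,6) unfolding pairs_with_all_def by blast
    have "zs Z3 = {s, e}"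
      using zs_eq_pair[OF Z3(1), of s e] Z3 3 assms(5,6) by (simp add: mem_zs)
    moreover have "q \<in> zs Z2"
      using Z2 assms(4) by (simp add: mem_zs)
    ultimately have "zs Z2 \<noteq> zs Z3"
      using 3 assms(3) by auto
    with Z2 Z3 show ?thesis
      by (intro pairs_with_all_if_two_zero_sets)
  qed (use assms(1,2) in simp_all)
qed

lemma pairs_with_all_elem: "e \<in> E \<Longrightarrow> pairs_with_all e"
proof -
  assume e: "e \<in> E"
  obtain q X Y where q: "q \<in> E" "X \<in> C" "Y \<in> C" "X q = Zer" "Y q = Zer" "zs X \<noteq> zs Y"
    by (rule two_zero_sets_through_elem)
  then have fq: "pairs_with_all q"
    by (intro pairs_with_all_if_two_zero_sets)
  obtain T where T: "T \<in> C" "T q \<noteq> Zer"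
    using cocircuit_nonzero_at[OF q(1)] .
  have "zs T \<noteq> {}"
    using card_zs[OF T(1)] by (metis card.empty zero_neq_numeral)
  then obtain s where s: "s \<in> E" "T s = Zer"
    by (auto simp: mem_zs)
  \<comment> \<open>The zero set of T avoids q, so it differs from that of a cocircuit through q and s.\<close>
  obtain Z where Z: "Z \<in> C" "Z q = Zer" "Z s = Zer"
    using fq s(1) unfolding pairs_with_all_def by blast
  have "zs Z \<noteq> zs T"
    using Z(2) T(2) q(1) by (auto simp: mem_zs)
  then have "pairs_with_all s"
    using Z(1,3) T(1) s(2) by (intro pairs_with_all_if_two_zero_sets)
  moreover have "q \<noteq> s"
    using T(2) s(2) by auto
  ultimately show ?thesis
    using pairs_with_all_if_two[OF fq _ _ q(1) s(1) e] by blast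
qed

lemma common_zero_cocircuit:
  assumes "e \<in> E" "f \<in> E" obtains Z where "Z \<in> C" "Z e = Zer" "Z f = Zer"
  using pairs_with_all_elem[OF assms(1)] assms(2) that unfolding pairs_with_all_def by blast

lemma card_sv_sep_le: "X \<in> C \<Longrightarrow> card (sv_sep X Y) \<le> card E - 2"
  using card_mono[OF _ sv_sep_subset] card_E_minus_zs finite_E by (metis finite_Diff)

lemma card_sv_sep_add_card_sv_sep_neg:
  assumes "X \<in> C" "c \<in> E" "X c \<noteq> Zer" "Z c = Zer"
  shows "card (sv_sep X Z) + card (sv_sep X (sv_neg Z)) \<le> card E - 3"
proof -
  have sub: "sv_sep X Z \<union> sv_sep X (sv_neg Z) \<subseteq> E - zs X - {c}"
    using sv_sep_subset[OF assms(1), of Z] sv_sep_subset[OF assms(1), of "sv_neg Z"] assms(4)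
    by (auto simp: mem_sv_sep)
  have fin: "finite (E - zs X - {c})"
    using finite_E by simp
  have "card (sv_sep X Z) + card (sv_sep X (sv_neg Z)) = card (sv_sep X Z \<union> sv_sep X (sv_neg Z))"
    using sub fin sv_sep_disjoint_sv_sep_neg[of X Z]
    by (intro card_Un_disjoint[symmetric]) (auto intro: finite_subset)
  also have "\<dots> \<le> card (E - zs X - {c})"
    using card_mono[OF fin sub] .
  also have "\<dots> = card E - 3"
    using card_E_minus_zs[OF assms(1)] assms(2,3) by (simp add: mem_zs)
  finally show ?thesis .
qed

lemma walk_via_cocircuit:
  assumes "X \<in> C" "Y \<in> C" "Z \<in> C" "a \<in> E" "b \<in> E"
    "X a = Zer" "Z a = Zer" "Z b = Zer" "Y b = Zer" "X \<noteq> sv_neg Z" "Z \<noteq> sv_neg Y"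
  shows "\<exists>k. walk E C X Y k \<and> k \<le> card (sv_sep X Z) + card (sv_sep Y Z) + 2"
proof -
  obtain k1 where k1: "walk E C X Z k1" "k1 \<le> card (sv_sep X Z) + 1"
    using walk_through_common_zero[OF assms(1,3,4,6,7,10)] by blast
  obtain k2 where k2: "walk E C Z Y k2" "k2 \<le> card (sv_sep Z Y) + 1"
    using walk_through_common_zero[OF assms(3,2,5,8,9,11)] by blast
  show ?thesis
    using walk_trans[OF k1(1) k2(1)] k1(2) k2(2) sv_sep_commute[of Z Y] by auto
qed

lemma walk_bound_common_zero:
  assumes "X \<in> C" "Y \<in> C" "zs X \<inter> zs Y \<noteq> {}" "X \<noteq> sv_neg Y"
  shows "\<exists>k. walk E C X Y k \<and> k \<le> card E - 1"
proof -
  obtain a where "a \<in> E" "X a = Zer" "Y a = Zer"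
    using assms(3) by (auto simp: mem_zs)
  then obtain k where "walk E C X Y k" "k \<le> card (sv_sep X Y) + 1"
    using walk_through_common_zero assms(1,2,4) by blast
  with card_sv_sep_le[OF assms(1), of Y] card_E_ge show ?thesis
    by (intro exI[of _ k]) auto
qed

lemma walk_bound_sv_neg:
  assumes "X \<in> C"
  shows "\<exists>k. walk E C X (sv_neg X) k \<and> k \<le> card E - 1"
proof -
  have "zs X \<noteq> {}"
    using card_zs[OF assms] by (metis card.empty zero_neq_numeral)
  then obtain a where a: "a \<in> E" "X a = Zer"
    by (auto simp: mem_zs)
  obtain c where c: "c \<in> E" "X c \<noteq> Zer"
    using cocircuit_nonzero_elem[OF assms] .
  obtain Z where Z: "Z \<in> C" "Z a = Zer" "Z c = Zer"
    using common_zero_cocircuit[OF a(1) c(1)] .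
  have "X \<noteq> sv_neg Z" "Z \<noteq> sv_neg (sv_neg X)"
    using c(2) Z(3) by auto
  then obtain k where "walk E C X (sv_neg X) k" "k \<le> card (sv_sep X Z) + card (sv_sep (sv_neg X) Z) + 2"
    using walk_via_cocircuit[OF assms sv_neg_in[OF assms] Z(1) a(1) a(1) a(2) Z(2) Z(2)] a(2) by auto
  moreover have "card (sv_sep X Z) + card (sv_sep (sv_neg X) Z) \<le> card E - 3"
    using card_sv_sep_add_card_sv_sep_neg[of X c Z, OF assms c Z(3)] by (simp add: sv_sep_neg)
  ultimately show ?thesis
    using card_E_ge by (intro exI[of _ k]) auto
qed

lemma walk_bound_disjoint_zero_sets:
  assumes "X \<in> C" "Y \<in> C" "zs X \<inter> zs Y = {}"
  shows "\<exists>k. walk E C X Y k \<and> k \<le> card E - 1"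
proof -
  have "zs X \<noteq> {}" "zs Y \<noteq> {}"
    using card_zs assms(1,2) by (metis card.empty zero_neq_numeral)+
  then obtain a c where "a \<in> zs X" "c \<in> zs Y"
    by blast
  then have a: "a \<in> E" "X a = Zer" "Y a \<noteq> Zer" and c: "c \<in> E" "Y c = Zer" "X c \<noteq> Zer"
    using assms(3) by (auto simp: mem_zs)
  obtain Z where Z: "Z \<in> C" "Z a = Zer" "Z c = Zer"
    using common_zero_cocircuit[OF a(1) c(1)] .
  have route: "\<exists>k. walk E C X Y k \<and> k \<le> card (sv_sep X Z') + card (sv_sep Y Z') + 2"
    if "Z' \<in> {Z, sv_neg Z}" for Z'
  proof -
    have "Z' \<in> C" "Z' a = Zer" "Z' c = Zer"
      using that Z sv_neg_in by auto
    moreover from this have "X \<noteq> sv_neg Z'" "Z' \<noteq> sv_neg Y"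
      using a(3) c(3) by auto
    ultimately show ?thesis
      using walk_via_cocircuit[OF assms(1,2) _ a(1) c(1) a(2) _ _ c(2)] by blast
  qed
  \<comment> \<open>Averaging over the routes through Z and through -Z: together they have length at most 2 (card E - 1).\<close>
  have "card (sv_sep X Z) + card (sv_sep X (sv_neg Z)) \<le> card E - 3"
    using card_sv_sep_add_card_sv_sep_neg[of X c Z, OF assms(1) c(1,3) Z(3)] .
  moreover have "card (sv_sep Y Z) + card (sv_sep Y (sv_neg Z)) \<le> card E - 3"
    using card_sv_sep_add_card_sv_sep_neg[of Y a Z, OF assms(2) a(1,3) Z(2)] .
  ultimately have "card (sv_sep X Z) + card (sv_sep Y Z) + 2 \<le> card E - 1 \<or>
      card (sv_sep X (sv_neg Z)) + card (sv_sep Y (sv_neg Z)) + 2 \<le> card E - 1"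
    using card_E_ge by linarith
  then show ?thesis
    using route[of Z] route[of "sv_neg Z"] by fastforce
qed

lemma walk_bound:
  assumes "X \<in> C" "Y \<in> C"
  shows "\<exists>k. walk E C X Y k \<and> k \<le> card E - 1"
proof (cases "zs X \<inter> zs Y = {}")
  case True
  then show ?thesis
    using walk_bound_disjoint_zero_sets[OF assms] by blast
next
  case False
  then show ?thesis
    using walk_bound_common_zero[OF assms False] walk_bound_sv_neg[OF assms(1)] by fastforce
qed

end

theorem theorem4p2:
  fixes E :: "'a set" and C :: "'a signvec set" and n :: nat
  assumes "n \<ge> 3"
    and "card E = n"
    and "oriented_matroid E C"
    and "om_rank C = 3"
    and "uniform_om E C"
  shows "cg_diam E C = enat (n - 1)"
proof -
  interpret uniform_rank3_om E C
    using assms by unfold_locales simp_all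
  have upper: "cg_dist E C X Y \<le> enat (n - 1)" if "X \<in> C" "Y \<in> C" for X Y
    using walk_bound[OF that] assms(2) unfolding cg_dist_eq_INF_walk by (auto intro: INF_lower2)
  obtain e where "e \<in> E"
    using assms(1,2) by fastforce
  then obtain X where X: "X \<in> C"
    using cocircuit_nonzero_at by metis
  have "enat (n - 1) \<le> cg_dist E C X (sv_neg X)"
    using walk_to_sv_neg_length assms(2) unfolding cg_dist_eq_INF_walk by (auto intro: INF_greatest)
  also have "\<dots> \<le> cg_diam E C"
    unfolding cg_diam_def using X sv_neg_in[OF X] by (intro SUP_upper2[OF X] SUP_upper)
  finally have "enat (n - 1) \<le> cg_diam E C" .
  moreover have "cg_diam E C \<le> enat (n - 1)"
    unfolding cg_diam_def using upper by (intro SUP_least)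
  ultimately show ?thesis
    by (rule antisym[rotated])
qed

end
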